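(* Let $\mathbb{D}=\{z\in\mathbb{C}:|z|<1\}$ and let $f=h+\overline{g}$ be a sense-preserving univalent harmonic mapping of $\mathbb{D}$ with $h(z)=z+\sum_{n=2}^\infty a_nz^n$ and $g(z)=\sum_{n=2}^\infty b_nz^n$ (so $f\in\mathcal{S}^0_H$), which is stable convex, i.e. $h+\mu\overline{g}$ is univalent and convex in $\mathbb{D}$ for every $|\mu|=1$. Let $m,q\in\mathbb{N}$, $\omega_m\in\mathcal{B}_m$ and $\omega_q\in\mathcal{B}_q$. Then for $s,p\in\mathbb{N}$, $$|Df(\omega_m(z))|^s+|f(\omega_q(z))|^p\le1\quad\text{and}\quad|\mathscr{D}f(\omega_m(z))|^s+|f(\omega_q(z))|^p\le1$$ for $|z|=r\le r_{4,s,m,p,q}$, where $r_{4,s,m,p,q}$ is the unique root in $(0,1)$ of $$\frac{r^{sm}}{(1-r^m)^{2s}}+\left(\frac{r^q}{1-r^q}\right)^p-1=0.$$ The radius $r_{4,s,m,p,q}$ is best possible.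
   Context: For $n\in\mathbb{N}$, $\mathcal{B}_n$ denotes the set of analytic functions $\omega:\mathbb{D}\to\mathbb{C}$ with $|\omega(z)|\le1$ in $\mathbb{D}$, $\omega(0)=\omega'(0)=\cdots=\omega^{(n-1)}(0)=0$ and $\omega^{(n)}(0)\neq0$. For a harmonic $f$, $Df=zf_z-\overline{z}f_{\overline{z}}$ and $\mathscr{D}f=zf_z+\overline{z}f_{\overline{z}}$, and $Df(\omega_m(z))$ means $(Df)(\omega_m(z))$ (similarly for $\mathscr{D}$). "Best possible" means that for every $r>r_{4,s,m,p,q}$ there exist such $f,\omega_m,\omega_q$ and $z$ with $|z|=r$ for which the inequality fails. *)

theory Defs
  imports "HOL-Analysis.Analysis"
begin

definition harm :: "(complex \<Rightarrow> complex) \<Rightarrow> (complex \<Rightarrow> complex) \<Rightarrow> complex \<Rightarrow> complex" where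
  "harm h g z = h z + cnj (g z)"

definition S0H :: "(complex \<Rightarrow> complex) \<Rightarrow> (complex \<Rightarrow> complex) \<Rightarrow> bool" where
  "S0H h g \<longleftrightarrow> h holomorphic_on ball 0 1 \<and> g holomorphic_on ball 0 1 \<and>
     h 0 = 0 \<and> deriv h 0 = 1 \<and> g 0 = 0 \<and> deriv g 0 = 0 \<and>
     (\<forall>z\<in>ball 0 1. norm (deriv g z) < norm (deriv h z)) \<and>
     inj_on (harm h g) (ball 0 1)"

definition stable_convex :: "(complex \<Rightarrow> complex) \<Rightarrow> (complex \<Rightarrow> complex) \<Rightarrow> bool" where
  "stable_convex h g \<longleftrightarrow> (\<forall>\<mu>. norm \<mu> = 1 \<longrightarrow>
     inj_on (\<lambda>z. h z + \<mu> * cnj (g z)) (ball 0 1) \<and>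
     convex ((\<lambda>z. h z + \<mu> * cnj (g z)) ` ball 0 1))"

definition Bcls :: "nat \<Rightarrow> (complex \<Rightarrow> complex) \<Rightarrow> bool" where
  "Bcls n \<omega> \<longleftrightarrow> \<omega> holomorphic_on ball 0 1 \<and> (\<forall>z\<in>ball 0 1. norm (\<omega> z) \<le> 1) \<and>
     (\<forall>k<n. (deriv ^^ k) \<omega> 0 = 0) \<and> (deriv ^^ n) \<omega> 0 \<noteq> 0"

text \<open>Df = z f_z - conj z f_{conj z} and script-D f = z f_z + conj z f_{conj z};
  for f = h + conj g: f_z = h', f_{conj z} = conj g'.\<close>
definition Dop :: "(complex \<Rightarrow> complex) \<Rightarrow> (complex \<Rightarrow> complex) \<Rightarrow> complex \<Rightarrow> complex" where
  "Dop h g z = z * deriv h z - cnj z * cnj (deriv g z)"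

definition Dscr :: "(complex \<Rightarrow> complex) \<Rightarrow> (complex \<Rightarrow> complex) \<Rightarrow> complex \<Rightarrow> complex" where
  "Dscr h g z = z * deriv h z + cnj z * cnj (deriv g z)"

definition F4 :: "nat \<Rightarrow> nat \<Rightarrow> nat \<Rightarrow> nat \<Rightarrow> real \<Rightarrow> real" where
  "F4 s m p q r = (r ^ (s * m)) / ((1 - r ^ m) ^ (2 * s)) + (r ^ q / (1 - r ^ q)) ^ p - 1"

definition r4 :: "nat \<Rightarrow> nat \<Rightarrow> nat \<Rightarrow> nat \<Rightarrow> real" where
  "r4 s m p q = (THE r. 0 < r \<and> r < 1 \<and> F4 s m p q r = 0)"

end

theory Submission
  imports "HOL-Complex_Analysis.Complex_Analysis" Defs
begin

(*
  For every unimodular nu, F = h + nu g is a normalised convex univalent map.  For a suitable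
  unimodular mu the univalent convex map h + mu conj g has the same component as F orthogonal to
  a given line; the preimage of that line is therefore connected and common to both maps, and
  its image under F fills the segment between any two points of F on the line.  Averaging F over
  the n-th roots of unity stays inside the convex image, and pulling the average back by the
  inverse of F gives a self-map of the disc vanishing to order n with leading coefficient
  F^(n)(0)/n!, so Schwarz's lemma bounds it by 1.  Summing Taylor series gives
  |F(w)| <= |w|/(1-|w|) and |F'(w)| <= 1/(1-|w|)^2; choosing nu to align the two terms turns
  these into bounds for |h| + |g| and |h'| + |g'|, hence for |f| and both derivative operators.
  As |omega_k(z)| <= |z|^k, both sums are at most F4(r) + 1, and F4 is strictly increasing; the
  half-plane map z/(1-z) with omega_k(z) = z^k attains F4(r) + 1 at z = r.
*)

section \<open>Zeros of order n and the Schwarz lemma\<close>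

lemma holomorphic_factor_power_ball:
  fixes f :: "complex \<Rightarrow> complex"
  assumes holf: "f holomorphic_on ball 0 1" and dfz: "\<And>i. i < n \<Longrightarrow> (deriv ^^ i) f 0 = 0"
  obtains \<psi> where "\<psi> holomorphic_on ball 0 1" "\<And>w. w \<in> ball 0 1 \<Longrightarrow> f w = w ^ n * \<psi> w"
    "\<psi> 0 = (deriv ^^ n) f 0 / fact n"
proof -
  define c where "c i = (deriv ^^ (i + n)) f 0 / fact (i + n)" for i
  define \<psi> where "\<psi> w = (\<Sum>i. c i * w ^ i)" for w
  have sums_\<psi>: "(\<lambda>i. c i * w ^ i) sums \<psi> w" and f_eq: "f w = w ^ n * \<psi> w"
    if w: "w \<in> ball 0 1" for w
  proof -
    define a where "a i = (deriv ^^ i) f 0 / fact i * w ^ i" for i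
    have "a sums f w"
      unfolding a_def using holomorphic_power_series[OF holf w] by simp
    moreover have "(\<Sum>i<n. a i) = 0"
      by (simp add: a_def dfz)
    ultimately have shifted: "(\<lambda>i. w ^ n * (c i * w ^ i)) sums f w"
      using sums_iff_shift'[of a n "f w"] by (simp add: a_def c_def power_add mult_ac)
    have "summable (\<lambda>i. c i * w ^ i)"
    proof (cases "w = 0")
      case True
      then show ?thesis by (simp only: summable_zero_power')
    next
      case False
      then show ?thesis
        using summable_mult[OF sums_summable[OF shifted], of "1 / w ^ n"] by simp
    qed
    then show sums: "(\<lambda>i. c i * w ^ i) sums \<psi> w"
      by (simp add: summable_sums_iff \<psi>_def)
    show "f w = w ^ n * \<psi> w"
      using sums_unique2[OF shifted sums_mult[OF sums, of "w ^ n"]] .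
  qed
  have "\<psi> holomorphic_on ball 0 1"
    by (rule power_series_holomorphic[where a=c]) (use sums_\<psi> in simp)
  moreover have "\<psi> 0 = (deriv ^^ n) f 0 / fact n"
    unfolding \<psi>_def by (subst suminf_finite[of "{0}"]) (auto simp: c_def)
  ultimately show ?thesis
    using that f_eq by blast
qed

lemma Schwarz_Lemma_power:
  fixes \<psi> :: "complex \<Rightarrow> complex"
  assumes hol: "\<psi> holomorphic_on ball 0 1"
    and bounded: "\<And>w. w \<in> ball 0 1 \<Longrightarrow> norm (w ^ n * \<psi> w) \<le> 1"
    and w: "w \<in> ball 0 1"
  shows "norm (\<psi> w) \<le> 1"
proof -
  have le: "norm (\<psi> w) \<le> 1 / \<rho> ^ n" if \<rho>: "norm w < \<rho>" "\<rho> < 1" for \<rho>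
  proof (rule maximum_modulus_frontier[of \<psi> "cball 0 \<rho>"])
    have sub: "cball 0 \<rho> \<subseteq> ball (0::complex) 1"
      using \<rho> by auto
    then show "\<psi> holomorphic_on interior (cball 0 \<rho>)"
      using hol holomorphic_on_subset interior_subset by (metis subset_trans)
    show "continuous_on (closure (cball 0 \<rho>)) \<psi>"
      using hol sub holomorphic_on_subset holomorphic_on_imp_continuous_on by auto
    show "bounded (cball (0::complex) \<rho>)" "w \<in> cball 0 \<rho>"
      using \<rho> by auto
    fix z :: complex
    assume "z \<in> frontier (cball 0 \<rho>)"
    then have z: "norm z = \<rho>"
      using \<rho> norm_ge_zero[of w] by (simp add: frontier_cball)
    then have "\<rho> ^ n * norm (\<psi> z) \<le> 1"
      using bounded[of z] \<rho> by (simp add: norm_mult norm_power)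
    moreover have "\<rho> ^ n > 0"
      using \<rho> norm_ge_zero[of w] by (intro zero_less_power) linarith
    ultimately show "norm (\<psi> z) \<le> 1 / \<rho> ^ n"
      by (simp add: field_simps)
  qed
  have "((\<lambda>\<rho>::real. 1 / \<rho> ^ n) \<longlongrightarrow> 1 / 1 ^ n) (at_left 1)"
    by (intro tendsto_intros) auto
  then have lim: "((\<lambda>\<rho>::real. 1 / \<rho> ^ n) \<longlongrightarrow> 1) (at_left 1)"
    by simp
  have ev: "eventually (\<lambda>\<rho>. norm w < \<rho> \<and> \<rho> < 1) (at_left (1::real))"
    using w by (intro eventually_at_leftI[of "norm w"]) auto
  show ?thesis
    by (rule tendsto_le[OF _ lim tendsto_const]) (auto intro: eventually_mono[OF ev] le)
qed

lemma Bcls_norm_le: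
  assumes B: "Bcls n \<omega>" and z: "z \<in> ball 0 1"
  shows "norm (\<omega> z) \<le> norm z ^ n"
proof -
  have hol_\<omega>: "\<omega> holomorphic_on ball 0 1" and vanish: "\<And>i. i < n \<Longrightarrow> (deriv ^^ i) \<omega> 0 = 0"
    using B by (auto simp: Bcls_def)
  obtain \<psi> where hol: "\<psi> holomorphic_on ball 0 1" and eq: "\<And>w. w \<in> ball 0 1 \<Longrightarrow> \<omega> w = w ^ n * \<psi> w"
    using holomorphic_factor_power_ball[OF hol_\<omega> vanish] by metis
  have "norm (\<psi> z) \<le> 1"
  proof (rule Schwarz_Lemma_power[OF hol _ z])
    fix w :: complex
    assume w: "w \<in> ball 0 1"
    then have "norm (\<omega> w) \<le> 1"
      using B by (simp add: Bcls_def)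
    then show "norm (w ^ n * \<psi> w) \<le> 1"
      by (simp add: eq[OF w])
  qed
  then show ?thesis
    using eq[OF z] by (simp add: norm_mult norm_power mult_left_le)
qed

lemma higher_deriv_sum:
  fixes f :: "'i \<Rightarrow> complex \<Rightarrow> complex"
  assumes "finite I" "\<And>i. i \<in> I \<Longrightarrow> f i holomorphic_on S" "open S" "z \<in> S"
  shows "(deriv ^^ j) (\<lambda>w. \<Sum>i\<in>I. f i w) z = (\<Sum>i\<in>I. (deriv ^^ j) (f i) z)"
  using assms(1,2)
proof (induction I rule: finite_induct)
  case (insert x F)
  have "(deriv ^^ j) (\<lambda>w. f x w + (\<Sum>i\<in>F. f i w)) z
          = (deriv ^^ j) (f x) z + (deriv ^^ j) (\<lambda>w. \<Sum>i\<in>F. f i w) z"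
    using insert assms(3,4) by (intro higher_deriv_add[where S=S]) (auto intro!: holomorphic_on_sum)
  with insert show ?case
    by simp
qed simp

section \<open>Convex univalent maps\<close>

lemma sum_powers_root_unity:
  assumes "n > 0"
  shows "(\<Sum>k<n. (exp (2 * of_real pi * \<i> / of_nat n) ^ j) ^ k) = (if n dvd j then of_nat n else 0)"
proof -
  define \<eta> where "\<eta> = exp (2 * of_real pi * \<i> * of_nat j / of_nat n)"
  have \<zeta>j: "exp (2 * of_real pi * \<i> / of_nat n) ^ j = \<eta>"
    unfolding \<eta>_def by (simp flip: exp_of_nat_mult add: mult_ac)
  have \<eta>: "\<eta> = 1 \<longleftrightarrow> n dvd j" "\<eta> ^ n = 1"
    using assms by (simp_all add: \<eta>_def complex_root_unity_eq_1 complex_root_unity)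
  show ?thesis
  proof (cases "n dvd j")
    case True
    then show ?thesis using \<eta> by (simp add: \<zeta>j)
  next
    case False
    then show ?thesis using \<eta> by (simp add: \<zeta>j geometric_sum)
  qed
qed

lemma higher_deriv_rotation_average:
  fixes F :: "complex \<Rightarrow> complex"
  assumes holF: "F holomorphic_on ball 0 1" and n: "n > 0"
    and \<zeta>: "\<zeta> = exp (2 * of_real pi * \<i> / of_nat n)"
  shows "(deriv ^^ j) (\<lambda>w. inverse (of_nat n) * (\<Sum>k<n. F (\<zeta> ^ k * w))) 0
           = (if n dvd j then (deriv ^^ j) F 0 else 0)"
proof -
  have norm_\<zeta>: "norm \<zeta> = 1"
    using \<zeta> by (simp add: norm_exp_eq_Re)
  then have rotate: "\<zeta> ^ k * w \<in> ball 0 1" if "w \<in> ball 0 1" for k w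
    using that by (simp add: norm_mult norm_power)
  have hol_rotate: "(\<lambda>w. F (\<zeta> ^ k * w)) holomorphic_on ball 0 1" for k
    by (rule holomorphic_on_compose_gen[of "\<lambda>w. \<zeta> ^ k * w" "ball 0 1" F "ball 0 1", unfolded o_def])
       (auto intro!: holomorphic_intros holF rotate)
  have "(deriv ^^ j) (\<lambda>w. inverse (of_nat n) * (\<Sum>k<n. F (\<zeta> ^ k * w))) 0
          = inverse (of_nat n) * (\<Sum>k<n. (deriv ^^ j) (\<lambda>w. F (\<zeta> ^ k * w)) 0)"
    by (simp add: higher_deriv_cmult[where A="ball 0 1"] higher_deriv_sum[where S="ball 0 1"]
        hol_rotate holomorphic_on_sum)
  also have "\<dots> = inverse (of_nat n) * (\<Sum>k<n. (\<zeta> ^ j) ^ k * (deriv ^^ j) F 0)"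
  proof -
    have "(deriv ^^ j) (\<lambda>w. F (\<zeta> ^ k * w)) 0 = (\<zeta> ^ k) ^ j * (deriv ^^ j) F (\<zeta> ^ k * 0)" for k
      by (rule higher_deriv_compose_linear[where S="ball 0 1", OF holF open_ball open_ball])
         (auto simp: norm_mult norm_power norm_\<zeta>)
    then show ?thesis
      by (simp flip: power_mult add: mult.commute)
  qed
  also have "\<dots> = inverse (of_nat n) * (\<Sum>k<n. (\<zeta> ^ j) ^ k) * (deriv ^^ j) F 0"
    by (simp add: sum_distrib_right)
  finally show ?thesis
    using n by (simp add: \<zeta> sum_powers_root_unity)
qed

lemma subordinate_leading_coeff_le:
  fixes F A \<psi> :: "complex \<Rightarrow> complex"
  assumes holF: "F holomorphic_on ball 0 1" and F0: "F 0 = 0" and dF0: "deriv F 0 = 1"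
    and inj: "inj_on F (ball 0 1)"
    and holA: "A holomorphic_on ball 0 1" and sub: "A ` ball 0 1 \<subseteq> F ` ball 0 1"
    and hol\<psi>: "\<psi> holomorphic_on ball 0 1" and A_eq: "\<And>w. w \<in> ball 0 1 \<Longrightarrow> A w = w ^ n * \<psi> w"
    and n: "n \<ge> 1"
  shows "norm (\<psi> 0) \<le> 1"
proof -
  define \<Omega> where "\<Omega> = F ` ball 0 1"
  have open_\<Omega>: "open \<Omega>"
    unfolding \<Omega>_def by (rule open_mapping_thm3[OF holF _ inj]) auto
  obtain Fi where Fi_hol: "Fi holomorphic_on \<Omega>"
    and Fi_deriv: "\<And>z. z \<in> ball 0 1 \<Longrightarrow> deriv F z * deriv Fi (F z) = 1"
    and Fi_F: "\<And>z. z \<in> ball 0 1 \<Longrightarrow> Fi (F z) = z"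
    using holomorphic_has_inverse[OF holF _ inj] unfolding \<Omega>_def by auto
  have Fi0: "Fi 0 = 0" and dFi0: "deriv Fi 0 = 1"
    using Fi_F[of 0] Fi_deriv[of 0] F0 dF0 by auto
  define k where "k v = (if v = 0 then 1 else Fi v / v)" for v
  have k_hol: "k holomorphic_on \<Omega>"
    by (rule pole_theorem_open_0[OF Fi_hol open_\<Omega>, of 0]) (auto simp: k_def Fi0 dFi0)
  have Fi_k: "Fi v = v * k v" for v
    by (simp add: k_def Fi0)
  have "(\<lambda>w. k (A w)) holomorphic_on ball 0 1"
    by (rule holomorphic_on_compose_gen[of A "ball 0 1" k \<Omega>, unfolded o_def])
       (use holA k_hol sub \<Omega>_def in auto)
  \<comment> \<open>\<open>Fi \<circ> A\<close> maps the disc into itself and equals \<open>w\<^sup>n k (A w) \<psi> w\<close>, where \<open>k (A 0) = 1\<close>.\<close>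
  then have "norm (k (A 0) * \<psi> 0) \<le> 1"
  proof (rule Schwarz_Lemma_power[of "\<lambda>w. k (A w) * \<psi> w", OF holomorphic_on_mult[OF _ hol\<psi>]])
    fix w :: complex
    assume w: "w \<in> ball 0 1"
    then obtain z where "z \<in> ball 0 1" "A w = F z"
      using sub by blast
    moreover have "w ^ n * (k (A w) * \<psi> w) = Fi (A w)"
      using A_eq[OF w] Fi_k[of "A w"] by (simp add: mult_ac)
    ultimately show "norm (w ^ n * (k (A w) * \<psi> w)) \<le> 1"
      using Fi_F by simp
  qed simp
  moreover have "A 0 = 0"
    using A_eq[of 0] n by simp
  ultimately show ?thesis
    by (simp add: k_def)
qed

lemma convex_univalent_higher_deriv_le:
  fixes F :: "complex \<Rightarrow> complex"
  assumes holF: "F holomorphic_on ball 0 1" and F0: "F 0 = 0" and dF0: "deriv F 0 = 1"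
    and inj: "inj_on F (ball 0 1)" and cvx: "convex (F ` ball 0 1)" and n: "n \<ge> 1"
  shows "norm ((deriv ^^ n) F 0) \<le> fact n"
proof -
  define \<zeta> :: complex where "\<zeta> = exp (2 * of_real pi * \<i> / of_nat n)"
  define A where "A w = inverse (of_nat n) * (\<Sum>j<n. F (\<zeta> ^ j * w))" for w
  have rotate: "\<zeta> ^ j * w \<in> ball 0 1" if "w \<in> ball 0 1" for j w
    using that by (simp add: \<zeta>_def norm_mult norm_power norm_exp_eq_Re)
  have A_hol: "A holomorphic_on ball 0 1"
    unfolding A_def
    by (intro holomorphic_intros holomorphic_on_sum
        holomorphic_on_compose_gen[of "\<lambda>w. \<zeta> ^ _ * w" "ball 0 1" F "ball 0 1", unfolded o_def])
       (auto intro: holF rotate)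
  have A_sub: "A ` ball 0 1 \<subseteq> F ` ball 0 1"
  proof clarify
    fix w :: complex
    assume "w \<in> ball 0 1"
    then have "(\<Sum>j<n. (1 / real n) *\<^sub>R F (\<zeta> ^ j * w)) \<in> F ` ball 0 1"
      using n rotate by (intro convex_sum[OF _ cvx]) auto
    then show "A w \<in> F ` ball 0 1"
      by (simp add: A_def scaleR_conv_of_real sum_distrib_left divide_inverse)
  qed
  have dA: "(deriv ^^ j) A 0 = (if n dvd j then (deriv ^^ j) F 0 else 0)" for j
    unfolding A_def using higher_deriv_rotation_average[OF holF _ \<zeta>_def] n by simp
  obtain \<psi> where "\<psi> holomorphic_on ball 0 1" "\<And>w. w \<in> ball 0 1 \<Longrightarrow> A w = w ^ n * \<psi> w"
    and \<psi>0: "\<psi> 0 = (deriv ^^ n) F 0 / fact n"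
  proof (rule holomorphic_factor_power_ball[OF A_hol])
    show "(deriv ^^ i) A 0 = 0" if "i < n" for i
      using that dA[of i] F0 by (cases "i = 0") (auto dest: dvd_imp_le)
  qed (simp add: dA)
  then have "norm (\<psi> 0) \<le> 1"
    using subordinate_leading_coeff_le[OF holF F0 dF0 inj A_hol A_sub] n by blast
  then have "norm ((deriv ^^ n) F 0 / fact n) \<le> 1"
    by (simp add: \<psi>0)
  then show ?thesis
    by (simp add: norm_divide field_simps)
qed

lemma growth_of_higher_deriv_le_fact:
  fixes F :: "complex \<Rightarrow> complex"
  assumes holF: "F holomorphic_on ball 0 1" and F0: "F 0 = 0"
    and coeff: "\<And>j. j \<ge> 1 \<Longrightarrow> norm ((deriv ^^ j) F 0) \<le> fact j" and w: "w \<in> ball 0 1"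
  shows "norm (F w) \<le> norm w / (1 - norm w)" and "norm (deriv F w) \<le> 1 / (1 - norm w)^2"
proof -
  define \<rho> where "\<rho> = norm w"
  have \<rho>: "0 \<le> \<rho>" "\<rho> < 1"
    using w by (auto simp: \<rho>_def)
  have "(\<lambda>j. (deriv ^^ j) F 0 / fact j * w ^ j) sums F w"
    using holomorphic_power_series[OF holF w] by simp
  then have F_sums: "(\<lambda>j. (deriv ^^ Suc j) F 0 / fact (Suc j) * w ^ Suc j) sums F w"
    using sums_Suc_iff[of "\<lambda>j. (deriv ^^ j) F 0 / fact j * w ^ j"] F0 by simp
  have "(\<lambda>j. \<rho> * \<rho> ^ j) sums (\<rho> * (1 / (1 - \<rho>)))"
    using \<rho> by (intro sums_mult geometric_sums) simp
  then have "norm (F w) \<le> \<rho> * (1 / (1 - \<rho>))"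
  proof (rule norm_sums_le[OF F_sums])
    fix j
    have "norm ((deriv ^^ Suc j) F 0 / fact (Suc j) * w ^ Suc j)
            = norm ((deriv ^^ Suc j) F 0) / fact (Suc j) * \<rho> ^ Suc j"
      by (simp only: norm_mult norm_divide norm_power norm_fact \<rho>_def)
    also have "\<dots> \<le> \<rho> ^ Suc j"
      using coeff[of "Suc j"] \<rho> by (intro mult_left_le_one_le) (auto simp: divide_le_eq_1)
    finally show "norm ((deriv ^^ Suc j) F 0 / fact (Suc j) * w ^ Suc j) \<le> \<rho> * \<rho> ^ j"
      by simp
  qed
  then show "norm (F w) \<le> norm w / (1 - norm w)"
    by (simp add: \<rho>_def)
  have "deriv F holomorphic_on ball 0 1"
    using holF by (rule holomorphic_deriv) simp
  from holomorphic_power_series[OF this w]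
  have dF_sums: "(\<lambda>j. (deriv ^^ Suc j) F 0 / fact j * w ^ j) sums deriv F w"
    by (simp add: funpow_Suc_right del: funpow.simps)
  have "(\<lambda>j. of_nat (Suc j) * \<rho> ^ j) sums (1 / (1 - \<rho>)^2)"
    using \<rho> by (intro geometric_deriv_sums) simp
  then have "norm (deriv F w) \<le> 1 / (1 - \<rho>)^2"
  proof (rule norm_sums_le[OF dF_sums])
    fix j
    have "norm ((deriv ^^ Suc j) F 0 / fact j * w ^ j) = norm ((deriv ^^ Suc j) F 0) / fact j * \<rho> ^ j"
      by (simp only: norm_mult norm_divide norm_power norm_fact \<rho>_def)
    also have "\<dots> \<le> fact (Suc j) / fact j * \<rho> ^ j"
      using coeff[of "Suc j"] \<rho> by (intro mult_right_mono divide_right_mono) auto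
    also have "\<dots> = of_nat (Suc j) * \<rho> ^ j"
      by (simp add: fact_Suc)
    finally show "norm ((deriv ^^ Suc j) F 0 / fact j * w ^ j) \<le> of_nat (Suc j) * \<rho> ^ j" .
  qed
  then show "norm (deriv F w) \<le> 1 / (1 - norm w)^2"
    by (simp add: \<rho>_def)
qed

section \<open>Stable convex harmonic maps\<close>

lemma stable_convex_inj_on_add:
  assumes SC: "stable_convex h g" and \<nu>: "norm \<nu> = 1"
  shows "inj_on (\<lambda>z. h z + \<nu> * g z) (ball 0 1)"
proof (rule inj_onI)
  fix z1 z2
  assume z: "z1 \<in> ball 0 1" "z2 \<in> ball 0 1" and eq: "h z1 + \<nu> * g z1 = h z2 + \<nu> * g z2"
  define b where "b = g z1 - g z2"
  define \<mu> where "\<mu> = (if b = 0 then 1 else \<nu> * b / cnj b)"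
  have \<mu>: "norm \<mu> = 1"
    using \<nu> by (simp add: \<mu>_def norm_mult norm_divide)
  have "h z1 + \<mu> * cnj (g z1) - (h z2 + \<mu> * cnj (g z2)) = h z1 - h z2 + \<mu> * cnj b"
    by (simp add: b_def algebra_simps)
  also have "\<dots> = h z1 - h z2 + \<nu> * b"
    by (simp add: \<mu>_def)
  also have "\<dots> = 0"
    using eq by (simp add: b_def algebra_simps)
  finally have "h z1 + \<mu> * cnj (g z1) = h z2 + \<mu> * cnj (g z2)"
    by simp
  moreover have "inj_on (\<lambda>z. h z + \<mu> * cnj (g z)) (ball 0 1)"
    using SC \<mu> by (simp add: stable_convex_def)
  ultimately show "z1 = z2"
    using z by (auto dest: inj_onD)
qed

lemma closed_segment_subset_image_if_same_shadow:
  fixes F G :: "complex \<Rightarrow> complex"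
  assumes U: "open U" and contF: "continuous_on U F" and contG: "continuous_on U G"
    and injG: "inj_on G U" and cvxG: "convex (G ` U)"
    and shadow: "\<And>z. z \<in> U \<Longrightarrow> Im (cnj d * F z) = Im (cnj d * G z)"
    and x: "x \<in> F ` U" and y: "y \<in> F ` U" and xy: "Im (cnj d * x) = Im (cnj d * y)" and d: "d \<noteq> 0"
  shows "closed_segment x y \<subseteq> F ` U"
proof
  fix p
  assume "p \<in> closed_segment x y"
  then obtain u where u: "0 \<le> u" "u \<le> 1" and p: "p = (1 - u) *\<^sub>R x + u *\<^sub>R y"
    by (auto simp: closed_segment_def)
  define c where "c = Im (cnj d * x)"
  obtain Gi where hom: "homeomorphism U (G ` U) G Gi"
    using invariance_of_domain_homeomorphism[OF U contG _ injG] by auto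
  define T where "T = Gi ` (G ` U \<inter> {v. Im (cnj d * v) = c})"
  have T_eq: "T = {z \<in> U. Im (cnj d * F z) = c}"
  proof (intro equalityI subsetI)
    fix z
    assume "z \<in> T"
    then obtain v where "v \<in> G ` U" "Im (cnj d * v) = c" "z = Gi v"
      by (auto simp: T_def)
    then show "z \<in> {z \<in> U. Im (cnj d * F z) = c}"
      using hom shadow by (auto simp: homeomorphism_def)
  next
    fix z
    assume "z \<in> {z \<in> U. Im (cnj d * F z) = c}"
    then show "z \<in> T"
      using hom shadow unfolding T_def homeomorphism_def by (auto intro!: image_eqI[of z Gi "G z"])
  qed
  have "convex {v. Im (cnj d * v) = c}"
    unfolding convex_alt by (auto simp: scaleR_conv_of_real algebra_simps)
  then have "connected T"
    unfolding T_def using hom cvxG unfolding homeomorphism_def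
    by (intro connected_continuous_image convex_connected convex_Int)
       (auto intro: continuous_on_subset)
  then have "connected ((\<lambda>z. Re (cnj d * F z)) ` T)"
    using contF T_eq by (intro connected_continuous_image continuous_intros) (auto intro: continuous_on_subset)
  then have R: "convex ((\<lambda>z. Re (cnj d * F z)) ` T)"
    by (simp flip: is_interval_connected_1 is_interval_convex_1)
  have "Re (cnj d * x) \<in> (\<lambda>z. Re (cnj d * F z)) ` T" "Re (cnj d * y) \<in> (\<lambda>z. Re (cnj d * F z)) ` T"
    using x y xy by (auto simp: T_eq c_def)
  moreover have "Re (cnj d * p) = (1 - u) *\<^sub>R Re (cnj d * x) + u *\<^sub>R Re (cnj d * y)"
    by (simp add: p scaleR_conv_of_real algebra_simps)
  then have "Re (cnj d * p) \<in> closed_segment (Re (cnj d * x)) (Re (cnj d * y))"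
    using u unfolding in_segment by blast
  ultimately have "Re (cnj d * p) \<in> (\<lambda>z. Re (cnj d * F z)) ` T"
    using R unfolding convex_contains_segment by blast
  then obtain z where z: "z \<in> T" "Re (cnj d * p) = Re (cnj d * F z)"
    by blast
  have "Im (cnj d * p) = (1 - u) * Im (cnj d * x) + u * Im (cnj d * y)"
    by (simp add: p scaleR_conv_of_real algebra_simps)
  then have "Im (cnj d * p) = c"
    using xy unfolding c_def by (simp add: algebra_simps del: times_complex.sel)
  then have "cnj d * F z = cnj d * p"
    using z by (simp add: T_eq complex_eq_iff)
  then show "p \<in> F ` U"
    using z d by (auto simp: T_eq)
qed

lemma stable_convex_convex_image_add:
  assumes contH: "continuous_on (ball 0 1) h" and contG: "continuous_on (ball 0 1) g"
    and SC: "stable_convex h g" and \<nu>: "norm \<nu> = 1"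
  shows "convex ((\<lambda>z. h z + \<nu> * g z) ` ball 0 1)"
  unfolding convex_contains_segment
proof (intro ballI)
  fix x y
  assume x: "x \<in> (\<lambda>z. h z + \<nu> * g z) ` ball 0 1" and y: "y \<in> (\<lambda>z. h z + \<nu> * g z) ` ball 0 1"
  show "closed_segment x y \<subseteq> (\<lambda>z. h z + \<nu> * g z) ` ball 0 1"
  proof (cases "x = y")
    case True
    then show ?thesis
      using x by simp
  next
    case False
    define d where "d = y - x"
    \<comment> \<open>\<open>h + \<mu> cnj g\<close> has the same component as \<open>h + \<nu> g\<close> orthogonal to the line through \<open>x\<close> and \<open>y\<close>.\<close>
    define \<mu> where "\<mu> = - d * cnj \<nu> / cnj d"
    have d: "d \<noteq> 0"
      using False by (simp add: d_def)
    have \<mu>: "norm \<mu> = 1"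
      using \<nu> d by (simp add: \<mu>_def norm_mult norm_divide)
    have "cnj d * (\<mu> * cnj (g z)) = - cnj (cnj d * (\<nu> * g z))" for z
      using d by (simp add: \<mu>_def)
    then have shadow: "Im (cnj d * (h z + \<nu> * g z)) = Im (cnj d * (h z + \<mu> * cnj (g z)))" for z
      by (simp add: distrib_left algebra_simps)
    have "cnj d * y = cnj d * x + cnj d * d"
      by (simp add: d_def algebra_simps)
    then have "Im (cnj d * x) = Im (cnj d * y)"
      by (simp add: mult.commute)
    then show ?thesis
      using SC \<mu> contH contG shadow x y d unfolding stable_convex_def
      by (intro closed_segment_subset_image_if_same_shadow[where G="\<lambda>z. h z + \<mu> * cnj (g z)"])
         (auto intro!: continuous_intros)
  qed
qed

lemma stable_convex_add_growth:
  assumes S: "S0H h g" and SC: "stable_convex h g" and \<nu>: "norm \<nu> = 1" and w: "w \<in> ball 0 1"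
  shows "norm (h w + \<nu> * g w) \<le> norm w / (1 - norm w)"
    and "norm (deriv h w + \<nu> * deriv g w) \<le> 1 / (1 - norm w)^2"
proof -
  define F where "F z = h z + \<nu> * g z" for z
  have hol: "h holomorphic_on ball 0 1" "g holomorphic_on ball 0 1"
    using S by (auto simp: S0H_def)
  then have holF: "F holomorphic_on ball 0 1"
    unfolding F_def by (intro holomorphic_intros)
  have dF: "deriv F z = deriv h z + \<nu> * deriv g z" if "z \<in> ball 0 1" for z
    unfolding F_def using hol that
    by (auto simp: deriv_add deriv_cmult holomorphic_on_imp_differentiable_at field_differentiable_mult)
  have F0: "F 0 = 0" and dF0: "deriv F 0 = 1"
    using S dF[of 0] by (auto simp: S0H_def F_def)
  have "inj_on F (ball 0 1)" "convex (F ` ball 0 1)"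
    unfolding F_def using stable_convex_inj_on_add[OF SC \<nu>]
      stable_convex_convex_image_add[OF _ _ SC \<nu>] hol holomorphic_on_imp_continuous_on by auto
  then have "norm ((deriv ^^ j) F 0) \<le> fact j" if "j \<ge> 1" for j
    using convex_univalent_higher_deriv_le[OF holF F0 dF0] that by blast
  from growth_of_higher_deriv_le_fact[OF holF F0 this w]
  show "norm (h w + \<nu> * g w) \<le> norm w / (1 - norm w)"
    and "norm (deriv h w + \<nu> * deriv g w) \<le> 1 / (1 - norm w)^2"
    by (simp_all add: F_def dF[OF w])
qed

lemma exists_unimodular_norm_add:
  fixes a b :: complex
  obtains \<nu> where "norm \<nu> = 1" "norm (a + \<nu> * b) = norm a + norm b"
proof (cases "a = 0 \<or> b = 0")
  case True
  then show ?thesis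
    by (intro that[of 1]) auto
next
  case False
  have eq: "a + sgn a / sgn b * b = sgn a * of_real (norm a + norm b)"
    using False by (simp add: Complex.sgn_eq field_simps)
  have "norm (a + sgn a / sgn b * b) = norm a + norm b"
    using False unfolding eq by (simp add: norm_mult norm_sgn del: of_real_add)
  moreover have "norm (sgn a / sgn b) = 1"
    using False by (simp add: norm_divide norm_sgn)
  ultimately show ?thesis
    by (rule that[rotated])
qed

lemma stable_convex_harm_growth:
  assumes S: "S0H h g" and SC: "stable_convex h g" and w: "w \<in> ball 0 1"
  shows "norm (harm h g w) \<le> norm w / (1 - norm w)"
    and "norm (deriv h w) + norm (deriv g w) \<le> 1 / (1 - norm w)^2"
proof -
  obtain \<nu> where "norm \<nu> = 1" "norm (h w + \<nu> * g w) = norm (h w) + norm (g w)"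
    by (rule exists_unimodular_norm_add)
  moreover have "norm (harm h g w) \<le> norm (h w) + norm (g w)"
    unfolding harm_def by (metis complex_mod_cnj norm_triangle_ineq)
  ultimately show "norm (harm h g w) \<le> norm w / (1 - norm w)"
    using stable_convex_add_growth(1)[OF S SC _ w] by fastforce
  obtain \<nu> where "norm \<nu> = 1"
    "norm (deriv h w + \<nu> * deriv g w) = norm (deriv h w) + norm (deriv g w)"
    by (rule exists_unimodular_norm_add)
  then show "norm (deriv h w) + norm (deriv g w) \<le> 1 / (1 - norm w)^2"
    using stable_convex_add_growth(2)[OF S SC _ w] by fastforce
qed

lemma norm_Dop_le: "norm (Dop h g w) \<le> norm w * (norm (deriv h w) + norm (deriv g w))"
  unfolding Dop_def distrib_left by (metis complex_mod_cnj norm_mult norm_triangle_ineq4)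

lemma norm_Dscr_le: "norm (Dscr h g w) \<le> norm w * (norm (deriv h w) + norm (deriv g w))"
  unfolding Dscr_def distrib_left by (metis complex_mod_cnj norm_mult norm_triangle_ineq)

lemma stable_convex_Dop_Dscr_growth:
  assumes S: "S0H h g" and SC: "stable_convex h g" and w: "w \<in> ball 0 1"
  shows "norm (Dop h g w) \<le> norm w / (1 - norm w)^2" and "norm (Dscr h g w) \<le> norm w / (1 - norm w)^2"
proof -
  have "norm w * (norm (deriv h w) + norm (deriv g w)) \<le> norm w * (1 / (1 - norm w)^2)"
    using stable_convex_harm_growth(2)[OF S SC w] by (rule mult_left_mono) simp
  then show "norm (Dop h g w) \<le> norm w / (1 - norm w)^2" "norm (Dscr h g w) \<le> norm w / (1 - norm w)^2"
    using norm_Dop_le[of h g w] norm_Dscr_le[of h g w] by simp_all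
qed

section \<open>The radius\<close>

lemma div_one_minus_mono:
  fixes x y :: real
  assumes "0 \<le> x" "x \<le> y" "y < 1"
  shows "x / (1 - x) \<le> y / (1 - y)"
  using assms by (intro frac_le) auto

lemma div_one_minus_square_mono:
  fixes x y :: real
  assumes "0 \<le> x" "x \<le> y" "y < 1"
  shows "x / (1 - x)^2 \<le> y / (1 - y)^2"
  using assms by (intro frac_le power_mono) auto

lemma div_one_minus_square_strict_mono:
  fixes x y :: real
  assumes "0 \<le> x" "x < y" "y < 1"
  shows "x / (1 - x)^2 < y / (1 - y)^2"
  using assms by (intro frac_less power_mono) auto

lemma F4_eq: "F4 s m p q r = (r ^ m / (1 - r ^ m)^2) ^ s + (r ^ q / (1 - r ^ q)) ^ p - 1"
  by (simp add: F4_def power_divide power_mult[symmetric] mult.commute)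

lemma F4_strict_mono:
  fixes a b :: real
  assumes "s \<ge> 1" "m \<ge> 1" "q \<ge> 1" "0 \<le> a" "a < b" "b < 1"
  shows "F4 s m p q a < F4 s m p q b"
proof -
  have "a ^ m < b ^ m" "a ^ q \<le> b ^ q" "b ^ m < 1" "b ^ q < 1"
    using assms by (auto intro: power_strict_mono power_mono simp: power_less_one_iff)
  moreover have "0 \<le> a ^ q / (1 - a ^ q)"
    using assms by (simp add: power_le_one)
  ultimately have "(a ^ m / (1 - a ^ m)^2) ^ s < (b ^ m / (1 - b ^ m)^2) ^ s"
    and "(a ^ q / (1 - a ^ q)) ^ p \<le> (b ^ q / (1 - b ^ q)) ^ p"
    using assms div_one_minus_square_strict_mono[of "a ^ m" "b ^ m"] div_one_minus_mono[of "a ^ q" "b ^ q"]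
    by (auto intro!: power_strict_mono power_mono)
  then show ?thesis
    by (simp add: F4_eq)
qed

lemma F4_unique_root:
  assumes "s \<ge> 1" "m \<ge> 1" "p \<ge> 1" "q \<ge> 1"
  shows "\<exists>!r. 0 < r \<and> r < 1 \<and> F4 s m p q r = 0"
proof -
  define r\<^sub>1 where "r\<^sub>1 = root m (1/2)"
  have r\<^sub>1: "0 < r\<^sub>1" "r\<^sub>1 < 1" "r\<^sub>1 ^ m = 1/2"
    using assms by (auto simp: r\<^sub>1_def real_root_gt_zero)
  have "F4 s m p q 0 = -1"
    using assms by (simp add: F4_def power_0_left)
  moreover have "F4 s m p q r\<^sub>1 \<ge> 0"
  proof -
    have "r\<^sub>1 ^ m / (1 - r\<^sub>1 ^ m)^2 = 2"
      by (simp only: r\<^sub>1(3)) (simp add: power2_eq_square)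
    then have "F4 s m p q r\<^sub>1 = 2 ^ s + (r\<^sub>1 ^ q / (1 - r\<^sub>1 ^ q)) ^ p - 1"
      by (simp add: F4_eq)
    moreover have "0 \<le> (r\<^sub>1 ^ q / (1 - r\<^sub>1 ^ q)) ^ p"
      using r\<^sub>1 assms by (simp add: power_le_one)
    ultimately show ?thesis
      using one_le_power[of "2::real" s] by linarith
  qed
  moreover have "continuous_on {0..r\<^sub>1} (F4 s m p q)"
  proof -
    have "x ^ k \<noteq> 1" if "x \<in> {0..r\<^sub>1}" "k \<ge> 1" for x :: real and k
      using that r\<^sub>1 power_less_one_iff[of x k] by auto
    then show ?thesis
      unfolding F4_def using assms by (intro continuous_intros) auto
  qed
  ultimately obtain r where r: "0 \<le> r" "r \<le> r\<^sub>1" "F4 s m p q r = 0"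
    using IVT'[of "F4 s m p q" 0 0 r\<^sub>1] r\<^sub>1 by auto
  then have "0 < r \<and> r < 1 \<and> F4 s m p q r = 0"
    using \<open>F4 s m p q 0 = -1\<close> r\<^sub>1 by (cases "r = 0") auto
  moreover have "r' = r" if "0 < r' \<and> r' < 1 \<and> F4 s m p q r' = 0" for r'
    using that calculation F4_strict_mono[of s m q r' r p] F4_strict_mono[of s m q r r' p] assms
    by (cases r' r rule: linorder_cases) auto
  ultimately show ?thesis
    by blast
qed

lemma r4_root:
  assumes "s \<ge> 1" "m \<ge> 1" "p \<ge> 1" "q \<ge> 1"
  shows "0 < r4 s m p q" "r4 s m p q < 1" "F4 s m p q (r4 s m p q) = 0"
  using theI'[OF F4_unique_root[OF assms]] unfolding r4_def by auto

lemma sum_powers_le_F4: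
  assumes Bm: "Bcls m \<omega>m" and Bq: "Bcls q \<omega>q" and "m \<ge> 1" "q \<ge> 1"
    and \<Phi>: "\<And>w. w \<in> ball 0 1 \<Longrightarrow> norm (\<Phi> w) \<le> norm w / (1 - norm w)^2"
    and f: "\<And>w. w \<in> ball 0 1 \<Longrightarrow> norm (f w) \<le> norm w / (1 - norm w)"
    and z: "norm z \<le> r" and r: "r < 1"
  shows "norm (\<Phi> (\<omega>m z)) ^ s + norm (f (\<omega>q z)) ^ p \<le> F4 s m p q r + 1"
proof -
  have "z \<in> ball 0 1"
    using z r by simp
  then have wm: "norm (\<omega>m z) \<le> r ^ m" and wq: "norm (\<omega>q z) \<le> r ^ q"
    using Bcls_norm_le[OF Bm] Bcls_norm_le[OF Bq] power_mono[OF z norm_ge_zero] order_trans by metis+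
  have "0 \<le> r"
    using z norm_ge_zero order_trans by blast
  then have "r ^ m < 1" "r ^ q < 1"
    using r \<open>m \<ge> 1\<close> \<open>q \<ge> 1\<close> by (simp_all add: power_less_one_iff)
  then have "norm (\<Phi> (\<omega>m z)) \<le> r ^ m / (1 - r ^ m)^2" "norm (f (\<omega>q z)) \<le> r ^ q / (1 - r ^ q)"
    using \<Phi>[of "\<omega>m z"] f[of "\<omega>q z"] wm wq
      div_one_minus_square_mono[OF norm_ge_zero wm] div_one_minus_mono[OF norm_ge_zero wq]
    by auto
  then show ?thesis
    by (simp add: F4_eq add_mono power_mono)
qed

section \<open>The extremal map\<close>

lemma norm_lt_norm_one_add_iff: "norm w < norm (1 + w) \<longleftrightarrow> - 1/2 < Re (w :: complex)"
proof -
  have eq: "norm (1 + w)^2 = norm w ^ 2 + 1 + 2 * Re w"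
    unfolding cmod_power2 by (simp add: power2_eq_square algebra_simps)
  have "norm w < norm (1 + w) \<longleftrightarrow> norm w ^ 2 < norm (1 + w) ^ 2"
    by (meson norm_ge_zero power_less_imp_less_base power_strict_mono zero_less_numeral)
  then show ?thesis
    using eq by linarith
qed

definition halfplane_map :: "complex \<Rightarrow> complex" where
  "halfplane_map z = z / (1 - z)"

lemma deriv_halfplane_map:
  assumes "z \<noteq> 1"
  shows "deriv halfplane_map z = 1 / (1 - z)^2"
proof (rule DERIV_imp_deriv)
  show "(halfplane_map has_field_derivative 1 / (1 - z)^2) (at z)"
    unfolding halfplane_map_def[abs_def] using assms
    by (auto intro!: derivative_eq_intros simp: power2_eq_square field_simps)
qed

lemma inj_on_halfplane_map: "inj_on halfplane_map (- {1})"
  by (rule inj_onI) (auto simp: halfplane_map_def field_simps)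

lemma halfplane_map_image_ball: "halfplane_map ` ball 0 1 = {w. - 1/2 < Re w}"
proof (intro equalityI subsetI)
  fix w
  assume "w \<in> halfplane_map ` ball 0 1"
  then obtain z where z: "norm z < 1" "w = z / (1 - z)"
    by (auto simp: halfplane_map_def)
  then have "1 - z \<noteq> 0"
    by auto
  then have "1 + w = 1 / (1 - z)"
    using z(2) by (simp add: field_simps)
  then have "1 + w \<noteq> 0" "w / (1 + w) = z"
    using \<open>1 - z \<noteq> 0\<close> z(2) by simp_all
  then have "norm w / norm (1 + w) < 1"
    using z(1) by (metis norm_divide)
  then have "norm w < norm (1 + w)"
    using \<open>1 + w \<noteq> 0\<close> by (simp add: divide_less_eq)
  then show "w \<in> {w. - 1/2 < Re w}"
    by (simp add: norm_lt_norm_one_add_iff)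
next
  fix w
  assume "w \<in> {w. - 1/2 < Re w}"
  then have lt: "norm w < norm (1 + w)"
    by (simp add: norm_lt_norm_one_add_iff)
  then have "1 + w \<noteq> 0"
    by auto
  then have "halfplane_map (w / (1 + w)) = w" "w / (1 + w) \<in> ball 0 1"
    using lt by (simp_all add: halfplane_map_def field_simps norm_divide)
  then show "w \<in> halfplane_map ` ball 0 1"
    by (metis image_eqI)
qed

lemma S0H_halfplane_map: "S0H halfplane_map (\<lambda>_. 0)"
proof -
  have "halfplane_map holomorphic_on ball 0 1"
    unfolding halfplane_map_def[abs_def] by (intro holomorphic_intros) auto
  moreover have "harm halfplane_map (\<lambda>_. 0) = halfplane_map"
    by (simp add: harm_def fun_eq_iff)
  moreover have "inj_on halfplane_map (ball 0 1)"
    using inj_on_halfplane_map by (rule inj_on_subset) auto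
  moreover have "deriv halfplane_map z \<noteq> 0" if "z \<in> ball 0 1" for z
  proof -
    have "z \<noteq> 1"
      using that by auto
    then show ?thesis
      by (simp add: deriv_halfplane_map)
  qed
  ultimately show ?thesis
    by (auto simp: S0H_def deriv_halfplane_map halfplane_map_def)
qed

lemma stable_convex_halfplane_map: "stable_convex halfplane_map (\<lambda>_. 0)"
proof -
  have "inj_on halfplane_map (ball 0 1)"
    using inj_on_halfplane_map by (rule inj_on_subset) auto
  then show ?thesis
    by (simp add: stable_convex_def halfplane_map_image_ball convex_halfspace_Re_gt)
qed

lemma Bcls_power:
  assumes "n \<ge> 1"
  shows "Bcls n (\<lambda>z. z ^ n)"
proof -
  have "(deriv ^^ k) (\<lambda>z. z ^ n) (0::complex) = pochhammer (of_nat (Suc n - k)) k * 0 ^ (n - k)" for k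
    using higher_deriv_power[of k 0 n 0] by simp
  then have "(deriv ^^ k) (\<lambda>z. z ^ n) (0::complex) = (if k = n then fact n else 0)" if "k \<le> n" for k
    using that by (auto simp: pochhammer_fact)
  then show ?thesis
    using assms by (auto simp: Bcls_def norm_power power_le_one intro!: holomorphic_intros)
qed

lemma halfplane_map_attains_F4:
  assumes "0 \<le> r" "r < 1" "m \<ge> 1" "q \<ge> 1"
  shows "norm (Dop halfplane_map (\<lambda>_. 0) (of_real r ^ m)) ^ s
           + norm (harm halfplane_map (\<lambda>_. 0) (of_real r ^ q)) ^ p = F4 s m p q r + 1"
    and "norm (Dscr halfplane_map (\<lambda>_. 0) (of_real r ^ m)) ^ s
           + norm (harm halfplane_map (\<lambda>_. 0) (of_real r ^ q)) ^ p = F4 s m p q r + 1"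
proof -
  have extremal_values: "Dop halfplane_map (\<lambda>_. 0) (of_real t) = of_real (t / (1 - t)^2)"
    "Dscr halfplane_map (\<lambda>_. 0) (of_real t) = of_real (t / (1 - t)^2)"
    "harm halfplane_map (\<lambda>_. 0) (of_real t) = of_real (t / (1 - t))"
    if "t < 1" for t
    using that by (simp_all add: Dop_def Dscr_def harm_def halfplane_map_def deriv_halfplane_map)
  have "r ^ m < 1" "r ^ q < 1"
    using assms by (simp_all add: power_less_one_iff)
  moreover have "0 \<le> r ^ m / (1 - r ^ m)^2" "0 \<le> r ^ q / (1 - r ^ q)"
    using assms calculation by simp_all
  ultimately show "norm (Dop halfplane_map (\<lambda>_. 0) (of_real r ^ m)) ^ s
           + norm (harm halfplane_map (\<lambda>_. 0) (of_real r ^ q)) ^ p = F4 s m p q r + 1"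
    and "norm (Dscr halfplane_map (\<lambda>_. 0) (of_real r ^ m)) ^ s
           + norm (harm halfplane_map (\<lambda>_. 0) (of_real r ^ q)) ^ p = F4 s m p q r + 1"
    by (simp_all only: of_real_power[symmetric] extremal_values norm_of_real abs_of_nonneg)
       (simp_all add: F4_eq)
qed

theorem theorem3p4:
  fixes s m p q :: nat
  assumes "s \<ge> 1" and "m \<ge> 1" and "p \<ge> 1" and "q \<ge> 1"
  shows "(\<exists>!r. 0 < r \<and> r < 1 \<and> F4 s m p q r = 0)
    \<and> (\<forall>h g \<omega>m \<omega>q z. S0H h g \<and> stable_convex h g \<and> Bcls m \<omega>m \<and> Bcls q \<omega>q
          \<and> norm z \<le> r4 s m p q \<longrightarrow>
          norm (Dop h g (\<omega>m z)) ^ s + norm (harm h g (\<omega>q z)) ^ p \<le> 1 \<and>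
          norm (Dscr h g (\<omega>m z)) ^ s + norm (harm h g (\<omega>q z)) ^ p \<le> 1)
    \<and> (\<forall>r. r4 s m p q < r \<and> r < 1 \<longrightarrow>
          (\<exists>h g \<omega>m \<omega>q z. S0H h g \<and> stable_convex h g \<and> Bcls m \<omega>m \<and> Bcls q \<omega>q
             \<and> norm z = r \<and>
             norm (Dop h g (\<omega>m z)) ^ s + norm (harm h g (\<omega>q z)) ^ p > 1)
        \<and> (\<exists>h g \<omega>m \<omega>q z. S0H h g \<and> stable_convex h g \<and> Bcls m \<omega>m \<and> Bcls q \<omega>q
             \<and> norm z = r \<and>
             norm (Dscr h g (\<omega>m z)) ^ s + norm (harm h g (\<omega>q z)) ^ p > 1))"
proof (intro conjI allI impI)
  show "\<exists>!r. 0 < r \<and> r < 1 \<and> F4 s m p q r = 0"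
    using F4_unique_root assms .
  note \<rho> = r4_root[OF assms]
  fix h g \<omega>m \<omega>q and z :: complex
  assume "S0H h g \<and> stable_convex h g \<and> Bcls m \<omega>m \<and> Bcls q \<omega>q \<and> norm z \<le> r4 s m p q"
  then have S: "S0H h g" and SC: "stable_convex h g" and B: "Bcls m \<omega>m" "Bcls q \<omega>q"
    and z: "norm z \<le> r4 s m p q"
    by auto
  note bound = sum_powers_le_F4[OF B \<open>m \<ge> 1\<close> \<open>q \<ge> 1\<close> _ stable_convex_harm_growth(1)[OF S SC] z \<rho>(2)]
  show "norm (Dop h g (\<omega>m z)) ^ s + norm (harm h g (\<omega>q z)) ^ p \<le> 1"
    using bound[OF stable_convex_Dop_Dscr_growth(1)[OF S SC], of s p] \<rho>(3) by simp
  show "norm (Dscr h g (\<omega>m z)) ^ s + norm (harm h g (\<omega>q z)) ^ p \<le> 1"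
    using bound[OF stable_convex_Dop_Dscr_growth(2)[OF S SC], of s p] \<rho>(3) by simp
next
  fix r
  assume r: "r4 s m p q < r \<and> r < 1"
  then have "F4 s m p q r > 0"
    using F4_strict_mono[of s m q "r4 s m p q" r p] r4_root[OF assms] assms by auto
  moreover have "norm (of_real r :: complex) = r" "0 \<le> r"
    using r r4_root[OF assms] by auto
  ultimately show "\<exists>h g \<omega>m \<omega>q z. S0H h g \<and> stable_convex h g \<and> Bcls m \<omega>m \<and> Bcls q \<omega>q
             \<and> norm z = r \<and> norm (Dop h g (\<omega>m z)) ^ s + norm (harm h g (\<omega>q z)) ^ p > 1"
    and "\<exists>h g \<omega>m \<omega>q z. S0H h g \<and> stable_convex h g \<and> Bcls m \<omega>m \<and> Bcls q \<omega>q
             \<and> norm z = r \<and> norm (Dscr h g (\<omega>m z)) ^ s + norm (harm h g (\<omega>q z)) ^ p > 1"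
    using halfplane_map_attains_F4[of r m q s p] S0H_halfplane_map stable_convex_halfplane_map
      Bcls_power[of m] Bcls_power[of q] assms r
    by (intro exI[of _ halfplane_map] exI[of _ "\<lambda>_. 0"] exI[of _ "\<lambda>z. z ^ m"] exI[of _ "\<lambda>z. z ^ q"]
        exI[of _ "of_real r"]; simp)+
qed

end
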